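(* Let $\varepsilon(n,k)=e(n,k)+q\,o(n,k)$ and $\lambda(n,k)=L(n,k)+q\bar L(n,k)$ in $\mathbb{Z}[q]$. Then $\varepsilon(n,0)=\lambda(n,0)=1$ for all $n\ge0$, $\varepsilon(0,k)=\lambda(0,k)=0$ for $k>0$, and for all $n\ge1$, $k\ge1$, modulo $q^2-1$, $$\varepsilon(n,k)\equiv q^k\big(\varepsilon(n-1,k)+\varepsilon(n-1,k-1)\big),\qquad \lambda(n,k)\equiv q^k\lambda(n-1,k)+\lambda(n-1,k-1).$$
   Context: $e(n,k)$ (resp. $o(n,k)$) is the number of $k$-element subsets of $\{1,\dots,n\}$ with even (resp. odd) sum, the empty set counting as even. Losanitsch's triangle $(L(n,k))$ is defined by $L(0,k)=[k=0]$, $L(1,k)=[k\le 1]$ for $k\ge0$, $L(n,k)=0$ for $k<0$, and for $n\ge 2$: $L(n,k)=L(n-2,k)+\binom{n-2}{k-1}+L(n-2,k-2)$ (with $\binom{m}{j}=0$ for $j<0$ or $j>m$); $\bar L(n,k)=\binom nk-L(n,k)$. *)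

theory Defs
  imports "HOL-Computational_Algebra.Polynomial"
begin

definition e_cnt :: "nat \<Rightarrow> nat \<Rightarrow> nat" where
  "e_cnt n k = card {S. S \<subseteq> {1..n} \<and> card S = k \<and> even (\<Sum>S)}"

definition o_cnt :: "nat \<Rightarrow> nat \<Rightarrow> nat" where
  "o_cnt n k = card {S. S \<subseteq> {1..n} \<and> card S = k \<and> odd (\<Sum>S)}"

text \<open>Losanitsch's triangle; terms with negative second index are 0.\<close>
fun los :: "nat \<Rightarrow> nat \<Rightarrow> nat" where
  "los 0 k = (if k = 0 then 1 else 0)"
| "los (Suc 0) k = (if k \<le> 1 then 1 else 0)"
| "los (Suc (Suc n)) k =
     los n k + (if k \<ge> 1 then n choose (k - 1) else 0) + (if k \<ge> 2 then los n (k - 2) else 0)"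

definition los_bar :: "nat \<Rightarrow> nat \<Rightarrow> int" where
  "los_bar n k = int (n choose k) - int (los n k)"

definition eps :: "nat \<Rightarrow> nat \<Rightarrow> int poly" where
  "eps n k = of_nat (e_cnt n k) + [:0, 1:] * of_nat (o_cnt n k)"

definition lam :: "nat \<Rightarrow> nat \<Rightarrow> int poly" where
  "lam n k = of_nat (los n k) + [:0, 1:] * of_int (los_bar n k)"

end

theory Submission
  imports Defs
begin

text \<open>Modulo \<open>q\<^sup>2 - 1\<close> a power of \<open>q\<close> depends only on the parity of its exponent.
  Hence \<open>\<epsilon>(n,k)\<close> is congruent to the generating polynomial \<open>G(n,k) = \<Sum> q\<^bsup>\<Sum>S\<^esup>\<close> over the
  \<open>k\<close>-subsets \<open>S\<close> of \<open>{1..n}\<close>, and writing \<open>{1..n} = {1} \<union> (Suc ` {1..n-1})\<close> gives the exact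
  recurrence \<open>G(n,k) = q\<^sup>k (G(n-1,k) + G(n-1,k-1))\<close>.
  For Losanitsch's triangle the defining two-step recurrence implies
  \<open>L(n,k) = L(n-1,k-1) + L(n-1,k)\<close> for even \<open>k\<close> and \<open>L(n,k) = L(n-1,k-1) + L\<^bsup>-\<^esup>(n-1,k)\<close> for
  odd \<open>k\<close>; in the odd case the polynomial with the roles of \<open>L\<close> and \<open>L\<^bsup>-\<^esup>\<close> swapped is
  congruent to \<open>q \<lambda>(n-1,k)\<close>.\<close>

lemma square_minus_one_dvd_power_minus_power_mod_2:
  fixes x :: "'a::comm_ring_1"
  shows "x\<^sup>2 - 1 dvd x ^ n - x ^ (n mod 2)"
proof -
  have "x ^ n - x ^ (n mod 2) = ((x\<^sup>2) ^ (n div 2) - 1) * x ^ (n mod 2)"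
    by (metis (no_types) div_mult_mod_eq left_diff_distrib' mult.commute mult_1 power_add power_mult)
  then show ?thesis
    by (simp add: power_diff_1_eq)
qed

definition subset_sum_gf :: "'a::comm_semiring_1 \<Rightarrow> nat set \<Rightarrow> nat \<Rightarrow> 'a" where
  "subset_sum_gf x A k = (\<Sum>S | S \<subseteq> A \<and> card S = k. x ^ \<Sum>S)"

lemma subsets_card_0: "finite A \<Longrightarrow> {S. S \<subseteq> A \<and> card S = 0} = {{}}"
  by (auto dest: finite_subset)

lemma subsets_card_Suc_insert:
  assumes "finite A" "a \<notin> A"
  shows "{S. S \<subseteq> insert a A \<and> card S = Suc k}
    = {S. S \<subseteq> A \<and> card S = Suc k} \<union> insert a ` {S. S \<subseteq> A \<and> card S = k}"
proof (intro equalityI subsetI)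
  fix S assume S: "S \<in> {S. S \<subseteq> insert a A \<and> card S = Suc k}"
  then have "finite S"
    using assms(1) finite_subset by auto
  show "S \<in> {S. S \<subseteq> A \<and> card S = Suc k} \<union> insert a ` {S. S \<subseteq> A \<and> card S = k}"
  proof (cases "a \<in> S")
    case True
    then have "S = insert a (S - {a})" "S - {a} \<subseteq> A" "card (S - {a}) = k"
      using S \<open>finite S\<close> by auto
    then show ?thesis
      by blast
  qed (use S in auto)
next
  fix S assume "S \<in> {S. S \<subseteq> A \<and> card S = Suc k} \<union> insert a ` {S. S \<subseteq> A \<and> card S = k}"
  moreover have "card (insert a T) = Suc (card T)" if "T \<subseteq> A" for T
    using assms that by (meson card_insert_disjoint finite_subset subsetD)
  ultimately show "S \<in> {S. S \<subseteq> insert a A \<and> card S = Suc k}"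
    by auto
qed

lemma subset_sum_gf_insert:
  assumes "finite A" "a \<notin> A"
  shows "subset_sum_gf x (insert a A) (Suc k) = subset_sum_gf x A (Suc k) + x ^ a * subset_sum_gf x A k"
proof -
  have sum_insert: "\<Sum>(insert a S) = a + \<Sum>S" if "S \<subseteq> A" for S
    using assms that by (meson finite_subset subsetD sum.insert)
  have inj: "inj_on (insert a) {S. S \<subseteq> A \<and> card S = k}"
    using assms(2) by (auto simp: inj_on_def)
  have "(\<Sum>S\<in>insert a ` {S. S \<subseteq> A \<and> card S = k}. x ^ \<Sum>S) = x ^ a * subset_sum_gf x A k"
    unfolding subset_sum_gf_def sum.reindex[OF inj] sum_distrib_left
    by (intro sum.cong) (auto simp: power_add sum_insert)
  moreover have "{S. S \<subseteq> A \<and> card S = Suc k} \<inter> insert a ` {S. S \<subseteq> A \<and> card S = k} = {}"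
    using assms(2) by auto
  ultimately show ?thesis
    unfolding subset_sum_gf_def subsets_card_Suc_insert[OF assms]
    using assms(1) by (subst sum.union_disjoint) auto
qed

lemma sum_image_Suc:
  "finite A \<Longrightarrow> \<Sum>(Suc ` A) = \<Sum>A + card A"
  using sum_Suc[of "\<lambda>x. x" A] by (simp add: sum.reindex)

lemma subset_sum_gf_image_Suc:
  assumes "finite A"
  shows "subset_sum_gf x (Suc ` A) k = x ^ k * subset_sum_gf x A k"
proof -
  have fin: "finite S" if "S \<subseteq> A" for S
    using assms that finite_subset by blast
  have subsets: "{S. S \<subseteq> Suc ` A \<and> card S = k} = image Suc ` {T. T \<subseteq> A \<and> card T = k}"
    by (auto simp: card_image elim!: subset_imageE)
  have inj: "inj_on (image Suc) {T. T \<subseteq> A \<and> card T = k}"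
    by (simp add: inj_on_def inj_image_eq_iff)
  show ?thesis
    unfolding subset_sum_gf_def subsets sum.reindex[OF inj] sum_distrib_left
    by (intro sum.cong) (auto simp: sum_image_Suc power_add mult.commute fin)
qed

lemma subset_sum_gf_atLeastAtMost_Suc:
  "subset_sum_gf x {1..Suc n} (Suc k)
    = x ^ Suc k * (subset_sum_gf x {1..n} (Suc k) + subset_sum_gf x {1..n} k)"
proof -
  have "subset_sum_gf x {1..Suc n} (Suc k) = subset_sum_gf x (insert 1 (Suc ` {1..n})) (Suc k)"
    by (simp add: atLeastAtMost_insertL)
  also have "\<dots> = subset_sum_gf x (Suc ` {1..n}) (Suc k) + x * subset_sum_gf x (Suc ` {1..n}) k"
    by (subst subset_sum_gf_insert) auto
  also have "\<dots> = x ^ Suc k * (subset_sum_gf x {1..n} (Suc k) + subset_sum_gf x {1..n} k)"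
    by (simp only: subset_sum_gf_image_Suc finite_atLeastAtMost) (simp add: algebra_simps)
  finally show ?thesis .
qed

lemma X2_minus_one_eq: "[:-1, 0, 1:] = [:0, 1 :: 'a::comm_ring_1:]\<^sup>2 - 1"
  by (simp add: power2_eq_square one_pCons)

lemma X2_minus_one_dvd_X_power:
  "[:-1, 0, 1 :: 'a::comm_ring_1:] dvd [:0, 1:] ^ n - [:0, 1:] ^ (n mod 2)"
  unfolding X2_minus_one_eq by (rule square_minus_one_dvd_power_minus_power_mod_2)

lemma eps_eq_sum_X_power_mod_2:
  "eps n k = (\<Sum>S | S \<subseteq> {1..n} \<and> card S = k. [:0, 1:] ^ (\<Sum>S mod 2))"
proof -
  let ?F = "{S. S \<subseteq> {1..n} \<and> card S = k}" and ?E = "{S. even (\<Sum>S)}"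
  have "(\<Sum>S\<in>?F. [:0, 1:] ^ (\<Sum>S mod 2)) = (\<Sum>S\<in>?F. if even (\<Sum>S) then 1 else [:0, 1:])"
    by (intro sum.cong) (auto simp: mod_2_eq_odd)
  also have "\<dots> = of_nat (card (?F \<inter> ?E)) + of_nat (card (?F \<inter> - ?E)) * [:0, 1:]"
    by (simp add: sum.If_cases)
  also have "\<dots> = eps n k"
    unfolding eps_def e_cnt_def o_cnt_def by (simp add: Int_def conj_ac)
  finally show ?thesis ..
qed

lemma eps_cong_subset_sum_gf:
  "[:-1, 0, 1:] dvd subset_sum_gf [:0, 1:] {1..n} k - eps n k"
  unfolding subset_sum_gf_def eps_eq_sum_X_power_mod_2 sum_subtractf[symmetric]
  by (intro dvd_sum X2_minus_one_dvd_X_power)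

lemma los_0_right: "los n 0 = 1"
  by (induction n "0::nat" rule: los.induct) auto

lemma los_Suc_Suc:
  "int (los (Suc n) (Suc k)) =
    int (los n k) + (if even (Suc k) then int (los n (Suc k)) else los_bar n (Suc k))"
proof (induction n arbitrary: k rule: less_induct)
  case (less n)
  consider "n = 0" | "n = 1" | m where "n = Suc (Suc m)"
    by (metis One_nat_def not0_implies_Suc)
  then show ?case
  proof cases
    case 1
    then show ?thesis by (simp add: los_bar_def)
  next
    case 2
    then show ?thesis by (cases k) (auto simp: los_bar_def)
  next
    case 3
    then have IH: "int (los (Suc m) (Suc j)) =
        int (los m j) + (if even (Suc j) then int (los m (Suc j)) else los_bar m (Suc j))" for j
      using less by simp
    consider "k = 0" | "k = 1" | j where "k = Suc (Suc j)"
      by (metis One_nat_def not0_implies_Suc)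
    then show ?thesis
    proof cases
      case 1
      then show ?thesis using 3 IH[of 0] by (simp add: los_bar_def los_0_right)
    next
      case 2
      then show ?thesis using 3 IH[of 1] by (simp add: los_bar_def los_0_right numeral_2_eq_2)
    next
      case j: 3
      then show ?thesis using 3 IH[of j] IH[of "Suc (Suc j)"] by (simp add: los_bar_def)
    qed
  qed
qed

lemma eps_Suc_Suc_cong:
  "[:-1, 0, 1:] dvd eps (Suc m) (Suc j) - [:0, 1:] ^ Suc j * (eps m (Suc j) + eps m j)"
proof -
  let ?G = "\<lambda>n k. subset_sum_gf [:0, 1 :: int:] {1..n} k"
  have decomp: "eps (Suc m) (Suc j) - [:0, 1:] ^ Suc j * (eps m (Suc j) + eps m j)
    = [:0, 1:] ^ Suc j * ((?G m (Suc j) - eps m (Suc j)) + (?G m j - eps m j))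
      - (?G (Suc m) (Suc j) - eps (Suc m) (Suc j))"
    by (subst subset_sum_gf_atLeastAtMost_Suc) (simp add: algebra_simps)
  show ?thesis
    unfolding decomp by (intro dvd_diff dvd_add dvd_mult eps_cong_subset_sum_gf)
qed

lemma lam_Suc_Suc:
  "lam (Suc m) (Suc j) = lam m j +
    (if even (Suc j) then lam m (Suc j)
     else of_int (los_bar m (Suc j)) + [:0, 1:] * of_nat (los m (Suc j)))"
  using arg_cong[OF los_Suc_Suc[of m j], of "of_int :: int \<Rightarrow> int poly"]
  by (simp add: lam_def los_bar_def algebra_simps)

lemma lam_Suc_Suc_cong:
  "[:-1, 0, 1:] dvd lam (Suc m) (Suc j) - ([:0, 1:] ^ Suc j * lam m (Suc j) + lam m j)"
proof (cases "even (Suc j)")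
  case True
  have "lam (Suc m) (Suc j) - ([:0, 1:] ^ Suc j * lam m (Suc j) + lam m j)
    = - (([:0, 1:] ^ Suc j - [:0, 1:] ^ (Suc j mod 2)) * lam m (Suc j))"
    using True by (simp add: lam_Suc_Suc algebra_simps)
  then show ?thesis
    by (simp only: dvd_minus_iff) (rule dvd_mult2[OF X2_minus_one_dvd_X_power])
next
  case False
  then have "Suc j mod 2 = 1"
    by presburger
  have decomp: "lam (Suc m) (Suc j) - ([:0, 1:] ^ Suc j * lam m (Suc j) + lam m j)
    = [:-1, 0, 1:] * - of_int (los_bar m (Suc j))
      - ([:0, 1:] ^ Suc j - [:0, 1:] ^ (Suc j mod 2)) * lam m (Suc j)"
    using False \<open>Suc j mod 2 = 1\<close> unfolding lam_Suc_Suc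
    by (simp add: lam_def X2_minus_one_eq algebra_simps power2_eq_square)
  show ?thesis
    unfolding decomp by (intro dvd_diff dvd_triv_left dvd_mult2 X2_minus_one_dvd_X_power)
qed

theorem proposition4p3:
  shows "(\<forall>n. eps n 0 = 1 \<and> lam n 0 = 1)
    \<and> (\<forall>k>0. eps 0 k = 0 \<and> lam 0 k = 0)
    \<and> (\<forall>n\<ge>1. \<forall>k\<ge>1.
          [:-1, 0, 1:] dvd (eps n k - [:0, 1:] ^ k * (eps (n - 1) k + eps (n - 1) (k - 1)))
        \<and> [:-1, 0, 1:] dvd (lam n k - ([:0, 1:] ^ k * lam (n - 1) k + lam (n - 1) (k - 1))))"
proof (intro conjI allI impI)
  fix n
  show "eps n 0 = 1"
    by (simp add: eps_eq_sum_X_power_mod_2 subsets_card_0)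
  show "lam n 0 = 1"
    by (simp add: lam_def los_bar_def los_0_right)
next
  fix k :: nat
  assume "k > 0"
  then show "eps 0 k = 0" "lam 0 k = 0"
    by (auto simp: eps_eq_sum_X_power_mod_2 lam_def los_bar_def)
next
  fix n k :: nat
  assume "n \<ge> 1" "k \<ge> 1"
  then obtain m j where "n = Suc m" "k = Suc j"
    by (metis Suc_le_D One_nat_def)
  then show "[:-1, 0, 1:] dvd (eps n k - [:0, 1:] ^ k * (eps (n - 1) k + eps (n - 1) (k - 1)))"
    and "[:-1, 0, 1:] dvd (lam n k - ([:0, 1:] ^ k * lam (n - 1) k + lam (n - 1) (k - 1)))"
    by (simp_all only: diff_Suc_1 eps_Suc_Suc_cong lam_Suc_Suc_cong)
qed

end
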